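(* Let $n,k$ be integers with $3 \le k < n$, and consider the oriented $(n,k)$-star graph $\overrightarrow{S_{n,k}}$ with the clique-edge orientation described in the context. Let $v$ be a vertex and let $Q(v)$ be the oriented fundamental clique containing $v$. Let $n_E$ and $n_O$ denote the numbers of even-signed and odd-signed vertices in $Q(v)$. Then $n_E = n_O$ when $n-k$ is odd, and $|n_E - n_O| = 1$ when $n-k$ is even. Furthermore, $v$ has at least $\left\lfloor \frac{n-k}{2}\right\rfloor$ out-neighbours in $Q(v)$.
   Context: For integers $1 \le k < n$, the $(n,k)$-star graph $S_{n,k}$ has as vertices the $k$-permutations $u_1u_2\cdots u_k$ of $\{1,\dots,n\}$ (sequences of $k$ distinct elements). The clique neighbours of $u_1u_2\cdots u_k$ are the vertices $xu_2\cdots u_k$ with $x\in\{1,\dots,n\}\setminus\{u_1,\dots,u_k\}$; a vertex together with its clique neighbours forms a complete subgraph on $n-k+1$ vertices, called its fundamental clique (its edges are clique edges). (There are also star edges, joining $u_1\cdots u_k$ to the vertex obtained by swapping $u_1$ and $u_i$, $2\le i\le k$, but they play no role here.) The extended permutation label of a vertex $u = u_1\cdots u_k$ is the permutation $\sigma_u = u_1u_2\cdots u_k u_{k+1}\cdots u_n$ of $\{1,\dots,n\}$, where $u_{k+1}<u_{k+2}<\cdots<u_n$ is the increasing listing of $\{1,\dots,n\}\setminus\{u_1,\dots,u_k\}$. A vertex is even-signed (odd-signed) if $\sigma_u$ has an even (odd) number of inversions. Orientation of clique edges: for a clique edge $\{u,w\}$, if $\sigma_u$ and $\sigma_w$ have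 the same sign, the edge is directed from $u$ to $w$ iff $\sigma_u(1) > \sigma_w(1)$; if they have opposite signs, the edge is directed from $u$ to $w$ iff $\sigma_u(1) < \sigma_w(1)$. The oriented fundamental clique $Q(v)$ is the fundamental clique of $v$ with this orientation. *)

theory Defs
  imports Main
begin

definition star_vertex :: "nat \<Rightarrow> nat \<Rightarrow> nat list \<Rightarrow> bool" where
  "star_vertex n k u \<longleftrightarrow> length u = k \<and> distinct u \<and> set u \<subseteq> {1..n}"

text \<open>Extended permutation label sigma_u (as a list; sigma_u(1) is its head).\<close>
definition ext_label :: "nat \<Rightarrow> nat list \<Rightarrow> nat list" where
  "ext_label n u = u @ sorted_list_of_set ({1..n} - set u)"

definition inversions :: "nat list \<Rightarrow> nat" where
  "inversions xs = card {(i, j). i < j \<and> j < length xs \<and> xs ! i > xs ! j}"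

definition even_signed :: "nat \<Rightarrow> nat list \<Rightarrow> bool" where
  "even_signed n u \<longleftrightarrow> even (inversions (ext_label n u))"

definition fund_clique :: "nat \<Rightarrow> nat list \<Rightarrow> nat list set" where
  "fund_clique n u = {x # tl u | x. x \<in> {1..n} \<and> x \<notin> set (tl u)}"

definition clique_arc :: "nat \<Rightarrow> nat list \<Rightarrow> nat list \<Rightarrow> bool" where
  "clique_arc n u w \<longleftrightarrow>
     (if even_signed n u = even_signed n w
      then hd (ext_label n u) > hd (ext_label n w)
      else hd (ext_label n u) < hd (ext_label n w))"

definition out_nbrs_in_clique :: "nat \<Rightarrow> nat list \<Rightarrow> nat list set" where
  "out_nbrs_in_clique n v = {w \<in> fund_clique n v. w \<noteq> v \<and> clique_arc n v w}"

end

theory Submission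
  imports Defs
begin

text \<open>Write \<open>v = h # t\<close>. The fundamental clique of \<open>v\<close> consists of the vertices \<open>x # t\<close> with
  \<open>x\<close> ranging over \<open>S = {1..n} - set t\<close>, a set of \<open>n - k + 1\<close> elements. Counting the inversions
  of the extended label \<open>x # t @ sorted (S - {x})\<close> shows that its parity is the rank of \<open>x\<close>
  in \<open>S\<close> plus a constant depending only on \<open>t\<close>: the signs alternate as \<open>x\<close> runs through
  \<open>S\<close> in increasing order. This splits the clique into two classes whose sizes differ by
  \<open>|S| mod 2\<close>. If \<open>h\<close> has rank \<open>j\<close>, the out-neighbours of \<open>v\<close> are the vertices of the same
  sign with smaller head (ranks \<open>i < j\<close> of the parity of \<open>j\<close>) and those of opposite sign with larger head
  (ranks \<open>i > j\<close> of the other parity), that is \<open>j div 2 + (|S| - j) div 2 \<ge> (n - k) div 2\<close> of them.\<close>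

definition rank :: "'a::linorder set \<Rightarrow> 'a \<Rightarrow> nat" where
  "rank S x = card {y \<in> S. y < x}"

lemma rank_less_rank_iff:
  assumes "finite S" "x \<in> S" "y \<in> S"
  shows "rank S x < rank S y \<longleftrightarrow> x < y"
proof
  assume "x < y"
  then have "{z \<in> S. z < x} \<subset> {z \<in> S. z < y}"
    using assms(2) by auto
  then show "rank S x < rank S y"
    unfolding rank_def using assms(1) by (simp add: psubset_card_mono)
next
  assume "rank S x < rank S y"
  moreover have "rank S y \<le> rank S x" if "y \<le> x"
    unfolding rank_def using assms(1) that by (intro card_mono) auto
  ultimately show "x < y" by (meson not_le)
qed

lemma rank_less_card: "finite S \<Longrightarrow> x \<in> S \<Longrightarrow> rank S x < card S"
  unfolding rank_def by (intro psubset_card_mono) auto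

lemma bij_betw_rank:
  assumes "finite S"
  shows "bij_betw (rank S) S {..<card S}"
proof -
  have inj: "inj_on (rank S) S"
    using assms by (intro inj_onI) (metis rank_less_rank_iff less_irrefl neqE)
  have "rank S ` S \<subseteq> {..<card S}"
    using assms by (auto intro: rank_less_card)
  moreover have "card (rank S ` S) = card {..<card S}"
    using inj by (simp add: card_image)
  ultimately show ?thesis
    unfolding bij_betw_def using inj by (simp add: card_subset_eq)
qed

lemma card_rank_filter:
  assumes "finite S"
  shows "card {x \<in> S. P (rank S x)} = card {i. i < card S \<and> P i}"
proof -
  have bij: "bij_betw (rank S) S {..<card S}"
    using assms by (rule bij_betw_rank)
  then have "rank S ` {x \<in> S. P (rank S x)} = {i. i < card S \<and> P i}"
    by (auto simp: bij_betw_def)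
  moreover have "inj_on (rank S) {x \<in> S. P (rank S x)}"
    using bij by (auto simp: bij_betw_def intro: inj_on_subset)
  ultimately show ?thesis by (metis card_image)
qed

lemma card_less_even_add: "card {i. i < m \<and> even (i + c)} = (m + of_bool (even c)) div (2::nat)"
proof (induction m)
  case (Suc m)
  have "{i. i < Suc m \<and> even (i + c)} = {i. i < m \<and> even (i + c)} \<union> (if even (m + c) then {m} else {})"
    by (auto simp: less_Suc_eq)
  then show ?case using Suc by simp
qed simp

lemma card_less_alternating_around:
  assumes "j < m"
  shows "card {i. i < m \<and> i \<noteq> j \<and> (even (i + j) \<longleftrightarrow> i < j)} = j div 2 + (m - j) div 2"
proof -
  let ?below = "{i. i < j \<and> even (i + j)}" and ?above = "{i. j < i \<and> i < m \<and> odd (i + j)}"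
  have split: "{i. i < m \<and> i \<noteq> j \<and> (even (i + j) \<longleftrightarrow> i < j)} = ?below \<union> ?above"
    using assms by auto
  have "card ?below = j div 2"
    using card_less_even_add[of j j] by simp
  moreover have "?above = (+) (Suc j) ` {d. d < m - Suc j \<and> even (d + 0)}"
  proof (intro set_eqI iffI)
    fix i assume "i \<in> ?above"
    then show "i \<in> (+) (Suc j) ` {d. d < m - Suc j \<and> even (d + 0)}"
      by (auto intro!: image_eqI[of _ _ "i - Suc j"])
  qed auto
  then have "card ?above = (m - j) div 2"
    using card_less_even_add[of "m - Suc j" 0] assms by (simp add: card_image inj_on_def Suc_diff_Suc)
  ultimately show ?thesis
    unfolding split by (subst card_Un_disjoint) auto
qed

lemma div2_le_div2_add_div2:
  fixes j m :: nat
  assumes "j \<le> m"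
  shows "m div 2 \<le> j div 2 + (Suc m - j) div 2"
proof (cases "even j")
  case True
  then obtain a where "j = 2 * a" by blast
  then show ?thesis using assms by simp
next
  case False
  then obtain a where "j = 2 * a + 1" by (blast elim: oddE)
  then show ?thesis using assms by simp
qed

lemma inversions_Nil [simp]: "inversions [] = 0"
  by (simp add: inversions_def)

lemma inversions_Cons:
  "inversions (x # ys) = length (filter (\<lambda>y. y < x) ys) + inversions ys"
proof -
  let ?A = "(\<lambda>j. (0, Suc j)) ` {j. j < length ys \<and> ys ! j < x}"
  let ?B = "map_prod Suc Suc ` {(i, j). i < j \<and> j < length ys \<and> ys ! i > ys ! j}"
  have split: "{(i, j). i < j \<and> j < length (x # ys) \<and> (x # ys) ! i > (x # ys) ! j} = ?A \<union> ?B"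
  proof (rule set_eqI, clarify)
    fix i j
    show "(i, j) \<in> {(i, j). i < j \<and> j < length (x # ys) \<and> (x # ys) ! i > (x # ys) ! j}
      \<longleftrightarrow> (i, j) \<in> ?A \<union> ?B"
      by (cases i; cases j) (auto simp: image_iff)
  qed
  have "card ?A = length (filter (\<lambda>y. y < x) ys)"
    by (subst card_image) (auto simp: inj_on_def length_filter_conv_card)
  moreover have "card ?B = inversions ys"
    unfolding inversions_def by (subst card_image) (auto simp: inj_on_def)
  moreover have "finite ?B"
    by (rule finite_imageI, rule finite_subset[of _ "{..<length ys} \<times> {..<length ys}"]) auto
  ultimately show ?thesis
    unfolding inversions_def[of "x # ys"] split by (subst card_Un_disjoint) auto
qed

lemma inversions_append:
  "inversions (xs @ ys) = inversions xs + (\<Sum>a\<leftarrow>xs. length (filter (\<lambda>y. y < a) ys)) + inversions ys"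
  by (induction xs) (auto simp: inversions_Cons)

lemma inversions_sorted:
  assumes "sorted xs"
  shows "inversions xs = 0"
proof -
  have no_inversion: "{(i, j). i < j \<and> j < length xs \<and> xs ! i > xs ! j} = {}"
    using assms by (auto simp: sorted_iff_nth_mono leD)
  show ?thesis
    unfolding inversions_def no_inversion by simp
qed

lemma length_filter_less_sorted_list_of_set:
  "finite A \<Longrightarrow> length (filter (\<lambda>y. y < a) (sorted_list_of_set A)) = rank A a"
  unfolding rank_def by (subst distinct_length_filter) (auto intro: arg_cong[where f = card])

lemma rank_Diff_singleton:
  assumes "finite S" "x \<in> S"
  shows "rank (S - {x}) a + of_bool (x < a) = rank S a"
proof (cases "x < a")
  case True
  then have "{y \<in> S. y < a} = insert x {y \<in> S - {x}. y < a}"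
    using assms(2) by auto
  then show ?thesis
    unfolding rank_def using True assms(1) by simp
next
  case False
  then have "{y \<in> S. y < a} = {y \<in> S - {x}. y < a}" by auto
  then show ?thesis
    unfolding rank_def using False by simp
qed

text \<open>The even term \<open>2 * card {a \<in> set t. x < a}\<close> sits on the left to avoid truncated
  subtraction; only the parity of the identity is used.\<close>

lemma inversions_Cons_append_sorted:
  assumes "distinct t" "finite S" "x \<in> S" "set t \<inter> S = {}"
  shows "inversions (x # t @ sorted_list_of_set (S - {x})) + 2 * card {a \<in> set t. x < a}
       = rank S x + inversions t + (\<Sum>a\<in>set t. rank S a) + length t"
proof -
  define Z where "Z = sorted_list_of_set (S - {x})"
  have "inversions (x # t @ Z) = length (filter (\<lambda>y. y < x) t) + rank (S - {x}) x
      + inversions t + (\<Sum>a\<in>set t. rank (S - {x}) a)"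
    using assms(1,2) unfolding Z_def
    by (simp add: inversions_Cons inversions_append inversions_sorted
        length_filter_less_sorted_list_of_set sum_list_distinct_conv_sum_set)
  moreover have "length (filter (\<lambda>y. y < x) t) = card {a \<in> set t. a < x}"
    using assms(1) by (subst distinct_length_filter) (auto intro: arg_cong[where f = card])
  moreover have "rank (S - {x}) x = rank S x"
    using rank_Diff_singleton[OF assms(2,3), of x] by simp
  moreover have "(\<Sum>a\<in>set t. rank (S - {x}) a) + card {a \<in> set t. x < a} = (\<Sum>a\<in>set t. rank S a)"
  proof -
    have "(\<Sum>a\<in>set t. rank S a) = (\<Sum>a\<in>set t. rank (S - {x}) a + of_bool (x < a))"
      by (simp add: rank_Diff_singleton[OF assms(2,3)])
    also have "\<dots> = (\<Sum>a\<in>set t. rank (S - {x}) a) + card {a \<in> set t. x < a}"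
      by (simp add: sum.distrib sum_of_bool_eq Int_def)
    finally show ?thesis ..
  qed
  moreover have "card {a \<in> set t. a < x} + card {a \<in> set t. x < a} = length t"
  proof -
    have "card {a \<in> set t. a < x} + card {a \<in> set t. x < a}
        = card ({a \<in> set t. a < x} \<union> {a \<in> set t. x < a})"
      by (rule card_Un_disjoint[symmetric]) auto
    also have "{a \<in> set t. a < x} \<union> {a \<in> set t. x < a} = set t"
      using assms(3,4) by auto
    finally show ?thesis
      using distinct_card[OF assms(1)] by simp
  qed
  ultimately show ?thesis
    unfolding Z_def by linarith
qed

lemma even_signed_Cons_iff_rank:
  assumes "distinct t"
  obtains c where
    "\<And>x. x \<in> {1..n} - set t \<Longrightarrow> even_signed n (x # t) \<longleftrightarrow> even (rank ({1..n} - set t) x + c)"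
proof
  fix x
  let ?S = "{1..n} - set t"
  assume x: "x \<in> ?S"
  have "{1..n} - set (x # t) = ?S - {x}" by auto
  then have "ext_label n (x # t) = x # t @ sorted_list_of_set (?S - {x})"
    unfolding ext_label_def by simp
  then have "inversions (ext_label n (x # t)) + 2 * card {a \<in> set t. x < a}
      = rank ?S x + (inversions t + (\<Sum>a\<in>set t. rank ?S a) + length t)"
    using inversions_Cons_append_sorted[OF assms _ x] by auto
  then show "even_signed n (x # t) \<longleftrightarrow>
      even (rank ?S x + (inversions t + (\<Sum>a\<in>set t. rank ?S a) + length t))"
    unfolding even_signed_def by (metis dvd_add_left_iff dvd_triv_left)
qed

lemma card_fund_clique_filter:
  "card {u \<in> fund_clique n (h # t). P u} = card {x \<in> {1..n} - set t. P (x # t)}"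
proof -
  have "{u \<in> fund_clique n (h # t). P u} = (\<lambda>x. x # t) ` {x \<in> {1..n} - set t. P (x # t)}"
    unfolding fund_clique_def by auto
  then show ?thesis
    by (simp add: card_image inj_on_def)
qed

lemma card_even_signed_minus_odd_signed:
  fixes n :: nat
  assumes "distinct t"
  defines "S \<equiv> {1..n} - set t"
  shows "\<bar>int (card {u \<in> fund_clique n (h # t). even_signed n u})
          - int (card {u \<in> fund_clique n (h # t). \<not> even_signed n u})\<bar> = int (card S mod 2)"
proof -
  obtain c where sign: "\<And>x. x \<in> S \<Longrightarrow> even_signed n (x # t) \<longleftrightarrow> even (rank S x + c)"
    using even_signed_Cons_iff_rank[OF assms(1)] unfolding S_def by blast
  have fin: "finite S" unfolding S_def by simp
  have "card {u \<in> fund_clique n (h # t). even_signed n u} = card {x \<in> S. even (rank S x + c)}"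
    unfolding card_fund_clique_filter S_def[symmetric] using sign by (metis (lifting))
  also have "\<dots> = (card S + of_bool (even c)) div 2"
    by (subst card_rank_filter[OF fin]) (rule card_less_even_add)
  finally have even: "card {u \<in> fund_clique n (h # t). even_signed n u} = (card S + of_bool (even c)) div 2" .
  have "card {u \<in> fund_clique n (h # t). \<not> even_signed n u} = card {x \<in> S. even (rank S x + Suc c)}"
    unfolding card_fund_clique_filter S_def[symmetric] using sign by (metis (lifting) add_Suc_right even_Suc)
  also have "\<dots> = (card S + of_bool (odd c)) div 2"
    by (subst card_rank_filter[OF fin], subst card_less_even_add) simp
  finally have odd: "card {u \<in> fund_clique n (h # t). \<not> even_signed n u} = (card S + of_bool (odd c)) div 2" .
  show ?thesis
    unfolding even odd by (cases "even c"; cases "even (card S)") (auto elim!: evenE oddE)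
qed

lemma card_out_nbrs_in_clique:
  fixes n :: nat and t :: "nat list"
  defines "S \<equiv> {1..n} - set t"
  assumes t: "distinct t" and h: "h \<in> S"
  shows "card (out_nbrs_in_clique n (h # t)) = rank S h div 2 + (card S - rank S h) div 2"
proof -
  obtain c where sign: "\<And>x. x \<in> S \<Longrightarrow> even_signed n (x # t) \<longleftrightarrow> even (rank S x + c)"
    using even_signed_Cons_iff_rank[OF t] unfolding S_def by blast
  have fin: "finite S" unfolding S_def by simp
  have arc: "x # t \<noteq> h # t \<and> clique_arc n (h # t) (x # t) \<longleftrightarrow>
      rank S x \<noteq> rank S h \<and> (even (rank S x + rank S h) \<longleftrightarrow> rank S x < rank S h)" if x: "x \<in> S" for x
  proof -
    have "even_signed n (h # t) = even_signed n (x # t) \<longleftrightarrow> even (rank S x + rank S h)"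
      using sign[OF x] sign[OF h] by auto
    moreover have "rank S x < rank S h \<longleftrightarrow> x < h" "rank S h < rank S x \<longleftrightarrow> h < x"
      using rank_less_rank_iff[OF fin] x h by auto
    ultimately show ?thesis
      unfolding clique_arc_def ext_label_def by (auto simp: linorder_neq_iff)
  qed
  have "card (out_nbrs_in_clique n (h # t)) =
      card {x \<in> S. rank S x \<noteq> rank S h \<and> (even (rank S x + rank S h) \<longleftrightarrow> rank S x < rank S h)}"
    unfolding out_nbrs_in_clique_def card_fund_clique_filter S_def[symmetric] using arc by (metis (lifting))
  also have "\<dots> = card {i. i < card S \<and> i \<noteq> rank S h \<and> (even (i + rank S h) \<longleftrightarrow> i < rank S h)}"
    by (rule card_rank_filter[OF fin])
  also have "\<dots> = rank S h div 2 + (card S - rank S h) div 2"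
    using fin h by (intro card_less_alternating_around rank_less_card)
  finally show ?thesis .
qed

theorem proposition1:
  fixes n k :: nat and v :: "nat list"
  assumes "3 \<le> k" and "k < n" and "star_vertex n k v"
  defines "nE \<equiv> card {u \<in> fund_clique n v. even_signed n u}"
      and "nO \<equiv> card {u \<in> fund_clique n v. \<not> even_signed n u}"
  shows "(odd (n - k) \<longrightarrow> nE = nO)
       \<and> (even (n - k) \<longrightarrow> \<bar>int nE - int nO\<bar> = 1)
       \<and> card (out_nbrs_in_clique n v) \<ge> (n - k) div 2"
proof -
  obtain h t where v: "v = h # t"
    using assms(1,3) by (cases v) (auto simp: star_vertex_def)
  define S where "S = {1..n} - set t"
  have t: "distinct t" and h: "h \<in> S" and "set t \<subseteq> {1..n}" "length t = k - 1"
    using assms(3) unfolding star_vertex_def v S_def by auto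
  then have card_S: "card S = n - k + 1"
    unfolding S_def using assms(1,2) by (simp add: card_Diff_subset distinct_card)
  have "\<bar>int nE - int nO\<bar> = int (card S mod 2)"
    unfolding nE_def nO_def v S_def by (rule card_even_signed_minus_odd_signed[OF t])
  moreover have "card (out_nbrs_in_clique n v) = rank S h div 2 + (card S - rank S h) div 2"
    unfolding v S_def by (rule card_out_nbrs_in_clique[OF t h[unfolded S_def]])
  moreover have "rank S h < card S"
    using h by (intro rank_less_card) (simp_all add: S_def)
  moreover have "card S mod 2 = of_bool (even (n - k))"
    unfolding card_S by (simp add: mod2_eq_if)
  ultimately show ?thesis
    unfolding card_S using div2_le_div2_add_div2[of "rank S h" "n - k"] by auto
qed

end
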